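(* Consider a one-site PTM cascade with $n\ge1$ layers. Fix all rate constants and all total amounts (all positive) except $\overline{S}_i$ for some $i\in\{1,\dots,n\}$. Then, as $\overline{S}_i$ increases, for each $j\in\{1,\dots,i\}$ the BMSS value of $S_j^1$ strictly increases if $i-j$ is even and strictly decreases if $i-j$ is odd.
   Context: A one-site PTM cascade with $n$ layers has species $E=S_0^1$ and, for $i=1,\dots,n$, $S_i^0,S_i^1,F_i,Y_i^0,Y_i^1$, with reactions $S_{i-1}^1+S_i^0 \rightleftharpoons Y_i^0 \to S_{i-1}^1+S_i^1$ (rate constants $a_i^0,b_i^0,c_i^0$) and $F_i+S_i^1\rightleftharpoons Y_i^1\to F_i+S_i^0$ (rate constants $a_i^1,b_i^1,c_i^1$), all positive, mass-action kinetics. Put $\delta_i=a_i^1/(b_i^1+c_i^1)$, $\gamma_i=(c_i^1/c_i^0)\delta_i$, $\lambda_i=\frac{b_i^0+c_i^0}{a_i^0}\gamma_i$. Given total amounts $\overline{E},\overline{F}_i,\overline{S}_i$, a steady state is a real solution of: $Y_i^0=\gamma_iF_iS_i^1$, $Y_i^1=\delta_iF_iS_i^1$, $\lambda_iF_iS_i^1=S_i^0S_{i-1}^1$, $\overline{F}_i=F_i+Y_i^1$, $\overline{S}_i=S_i^0+S_i^1+Y_i^0+Y_i^1+Y_{i+1}^0$ ($i=1,\dots,n$, $Y_{n+1}^0:=0$), $\overline{E}=E+Y_1^0$. A BMSS is a steady state with positive total amounts and all concentrations nonnegative; for positive total amounts it exists and is unique. *)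

theory Defs
  imports Main "HOL.Real"
begin

text \<open>Rate constants are functions
nat \<Rightarrow> real indexed by the layer i = 1..n. Concentrations:
S0 i = S_i^0, S1 i = S_i^1 (with S1 0 = E = S_0^1), F i, Y0 i = Y_i^0, Y1 i = Y_i^1.\<close>

definition ptm_delta :: "(nat \<Rightarrow> real) \<Rightarrow> (nat \<Rightarrow> real) \<Rightarrow> (nat \<Rightarrow> real) \<Rightarrow> nat \<Rightarrow> real" where
  "ptm_delta a1 b1 c1 i = a1 i / (b1 i + c1 i)"

definition ptm_gamma :: "(nat \<Rightarrow> real) \<Rightarrow> (nat \<Rightarrow> real) \<Rightarrow> (nat \<Rightarrow> real) \<Rightarrow> (nat \<Rightarrow> real) \<Rightarrow> nat \<Rightarrow> real" where
  "ptm_gamma c0 a1 b1 c1 i = (c1 i / c0 i) * ptm_delta a1 b1 c1 i"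

definition ptm_lambda :: "(nat \<Rightarrow> real) \<Rightarrow> (nat \<Rightarrow> real) \<Rightarrow> (nat \<Rightarrow> real) \<Rightarrow>
    (nat \<Rightarrow> real) \<Rightarrow> (nat \<Rightarrow> real) \<Rightarrow> (nat \<Rightarrow> real) \<Rightarrow> nat \<Rightarrow> real" where
  "ptm_lambda a0 b0 c0 a1 b1 c1 i = ((b0 i + c0 i) / a0 i) * ptm_gamma c0 a1 b1 c1 i"

definition ptm_steady_state ::
  "nat \<Rightarrow> (nat \<Rightarrow> real) \<Rightarrow> (nat \<Rightarrow> real) \<Rightarrow> (nat \<Rightarrow> real) \<Rightarrow>
   (nat \<Rightarrow> real) \<Rightarrow> (nat \<Rightarrow> real) \<Rightarrow> (nat \<Rightarrow> real) \<Rightarrow>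
   real \<Rightarrow> (nat \<Rightarrow> real) \<Rightarrow> (nat \<Rightarrow> real) \<Rightarrow>
   (nat \<Rightarrow> real) \<Rightarrow> (nat \<Rightarrow> real) \<Rightarrow> (nat \<Rightarrow> real) \<Rightarrow> (nat \<Rightarrow> real) \<Rightarrow> (nat \<Rightarrow> real) \<Rightarrow> bool" where
  "ptm_steady_state n a0 b0 c0 a1 b1 c1 Ebar Fbar Sbar S0 S1 F Y0 Y1 \<longleftrightarrow>
     (\<forall>i\<in>{1..n}.
        Y0 i = ptm_gamma c0 a1 b1 c1 i * F i * S1 i \<and>
        Y1 i = ptm_delta a1 b1 c1 i * F i * S1 i \<and>
        ptm_lambda a0 b0 c0 a1 b1 c1 i * F i * S1 i = S0 i * S1 (i - 1) \<and>
        Fbar i = F i + Y1 i \<and>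
        Sbar i = S0 i + S1 i + Y0 i + Y1 i + (if i < n then Y0 (i + 1) else 0)) \<and>
     Ebar = S1 0 + Y0 1"

text \<open>BMSS: steady state with all concentrations nonnegative
(total amounts are assumed positive separately).\<close>
definition ptm_bmss ::
  "nat \<Rightarrow> (nat \<Rightarrow> real) \<Rightarrow> (nat \<Rightarrow> real) \<Rightarrow> (nat \<Rightarrow> real) \<Rightarrow>
   (nat \<Rightarrow> real) \<Rightarrow> (nat \<Rightarrow> real) \<Rightarrow> (nat \<Rightarrow> real) \<Rightarrow>
   real \<Rightarrow> (nat \<Rightarrow> real) \<Rightarrow> (nat \<Rightarrow> real) \<Rightarrow>
   (nat \<Rightarrow> real) \<Rightarrow> (nat \<Rightarrow> real) \<Rightarrow> (nat \<Rightarrow> real) \<Rightarrow> (nat \<Rightarrow> real) \<Rightarrow> (nat \<Rightarrow> real) \<Rightarrow> bool" where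
  "ptm_bmss n a0 b0 c0 a1 b1 c1 Ebar Fbar Sbar S0 S1 F Y0 Y1 \<longleftrightarrow>
     ptm_steady_state n a0 b0 c0 a1 b1 c1 Ebar Fbar Sbar S0 S1 F Y0 Y1 \<and>
     S1 0 \<ge> 0 \<and>
     (\<forall>i\<in>{1..n}. S0 i \<ge> 0 \<and> S1 i \<ge> 0 \<and> F i \<ge> 0 \<and> Y0 i \<ge> 0 \<and> Y1 i \<ge> 0)"

end

theory Submission
  imports Defs
begin

(* Write x_k = S_k^1 (x_0 = E), q_k = S_k^0 and p_k = F_k S_k^1.  At a steady state
     q_k x_(k-1) = lambda_k p_k,          E_bar = x_0 + gamma_1 p_1,
     S_bar_k = q_k + x_k + (gamma_k + delta_k) p_k + gamma_(k+1) p_(k+1)   (last term only if k < n),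
   and p_k = F_bar_k x_k / (1 + delta_k x_k) moves in the same direction as x_k.
   Comparing two positive steady states, these relations propagate the sign D_k of the change
   of x_k through the cascade: above the perturbed layer i the sign alternates
   (D_k = -D_(k-1)), below it the sign is constant, and at layer i it equals the sign of the
   change of S_bar_i.  Hence D_j = (-1)^(i-j) sgn(S_bar_i' - S_bar_i) for j <= i. *)

lemma sgn_add_same:
  fixes a b :: real
  shows "sgn a = s \<Longrightarrow> sgn b = s \<Longrightarrow> sgn (a + b) = s"
  by (auto simp: sgn_if split: if_splits)

lemma sgn_add_if_same:
  fixes a b :: real
  assumes "sgn a = s" and "P \<Longrightarrow> sgn b = s"
  shows "sgn (a + (if P then b else 0)) = s"
  using assms sgn_add_same by (cases P) auto

text \<open>This is the sign rule of a binding equilibrium.\<close>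
lemma sgn_binding_balance:
  fixes q x l p q' x' p' s :: real
  assumes eq: "q * x = l * p" and eq': "q' * x' = l * p'"
    and pos: "0 < q" "0 < x'" "0 < l"
    and sp: "sgn (p' - p) = s" and sx: "sgn (x' - x) = - s"
  shows "sgn (q' - q) = s"
proof -
  have split: "(q' - q) * x' = l * (p' - p) + q * (x - x')"
    using eq eq' by (simp add: algebra_simps)
  have "sgn (l * (p' - p)) = s" "sgn (q * (x - x')) = s"
    using pos sp sx by (simp_all add: sgn_mult sgn_minus[of "x' - x", simplified])
  then have "sgn ((q' - q) * x') = s"
    unfolding split by (rule sgn_add_same)
  then show ?thesis
    using pos by (simp add: sgn_mult)
qed

lemma sgn_saturation:
  fixes F F' d x x' B :: real
  assumes "F * (1 + d * x) = B" "F' * (1 + d * x') = B" "0 < d" "0 < B" "0 \<le> x" "0 \<le> x'"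
  shows "sgn (F' * x' - F * x) = sgn (x' - x)"
proof -
  have pos: "1 + d * x > 0" "1 + d * x' > 0"
    using assms by (auto intro: add_pos_nonneg)
  have free: "F = B / (1 + d * x)" "F' = B / (1 + d * x')"
    using assms(1,2) pos by (auto simp: field_simps)
  have "F' * x' - F * x = B * (x' - x) / ((1 + d * x) * (1 + d * x'))"
    unfolding free using pos by (simp add: field_simps)
  then show ?thesis
    using pos assms(4) by (simp add: sgn_mult sgn_divide)
qed

section \<open>Sign propagation between two steady states of an abstract cascade\<close>

locale cascade_comparison =
  fixes n :: nat
    and x x' q q' p p' l g c Sb Sb' :: "nat \<Rightarrow> real"
    and E :: real
  assumes x_pos: "\<And>k. k \<le> n \<Longrightarrow> 0 < x k \<and> 0 < x' k"
    and q_pos: "\<And>k. k \<in> {1..n} \<Longrightarrow> 0 < q k \<and> 0 < q' k"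
    and const_pos: "\<And>k. k \<in> {1..n} \<Longrightarrow> 0 < l k \<and> 0 < g k \<and> 0 < c k"
    and p_sgn: "\<And>k. k \<in> {1..n} \<Longrightarrow> sgn (p' k - p k) = sgn (x' k - x k)"
    and binding: "\<And>k. k \<in> {1..n} \<Longrightarrow> q k * x (k - 1) = l k * p k \<and> q' k * x' (k - 1) = l k * p' k"
    and source_total: "E = x 0 + g 1 * p 1" "E = x' 0 + g 1 * p' 1"
    and layer_total: "\<And>k. k \<in> {1..n} \<Longrightarrow>
          Sb k = q k + x k + c k * p k + (if k < n then g (Suc k) * p (Suc k) else 0)"
      "\<And>k. k \<in> {1..n} \<Longrightarrow>
          Sb' k = q' k + x' k + c k * p' k + (if k < n then g (Suc k) * p' (Suc k) else 0)"
begin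

text \<open>The direction in which the modified form of layer \<open>k\<close> moves, and the changes of the
  parts of the layer total that move with it: the free modified form together with the complexes
  of layer \<open>k\<close>, and the complex formed with the next layer.\<close>
definition D :: "nat \<Rightarrow> real" where
  "D k = sgn (x' k - x k)"

definition own_change :: "nat \<Rightarrow> real" where
  "own_change k = (x' k - x k) + c k * (p' k - p k)"

definition next_change :: "nat \<Rightarrow> real" where
  "next_change k = (if k < n then g (Suc k) * (p' (Suc k) - p (Suc k)) else 0)"

lemma layer_change:
  assumes "k \<in> {1..n}"
  shows "Sb' k - Sb k = (q' k - q k) + own_change k + next_change k"
  using layer_total[OF assms] by (simp add: own_change_def next_change_def algebra_simps)

lemma sgn_scaled_p_change: "k \<in> {1..n} \<Longrightarrow> 0 < a \<Longrightarrow> sgn (a * (p' k - p k)) = D k"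
  using p_sgn by (simp add: D_def sgn_mult)

lemma sgn_own_change:
  assumes "k \<in> {1..n}"
  shows "sgn (own_change k) = D k"
  unfolding own_change_def
  by (rule sgn_add_same) (use assms const_pos[OF assms] sgn_scaled_p_change in \<open>auto simp: D_def\<close>)

lemma sgn_next_change:
  assumes "k < n"
  shows "sgn (next_change k) = D (Suc k)"
  using assms const_pos[of "Suc k"] sgn_scaled_p_change[of "Suc k"] by (simp add: next_change_def)

lemma sgn_add_next_change:
  assumes "sgn a = s" and "k < n \<Longrightarrow> D (Suc k) = s"
  shows "sgn (a + next_change k) = s"
  using sgn_add_if_same[of a s "k < n"] assms sgn_next_change by (simp add: next_change_def)

lemma q_change_follows:
  assumes k: "k \<in> {1..n}" and alt: "D (k - 1) = - D k"
  shows "sgn (q' k - q k) = D k"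
  using binding[OF k] q_pos[OF k] x_pos[of "k - 1"] const_pos[OF k] p_sgn[OF k] alt k
  by (intro sgn_binding_balance[of "q k" "x (k - 1)" "l k" "p k"]) (auto simp: D_def)

lemma x_prev_change_follows:
  assumes k: "k \<in> {1..n}" and opp: "sgn (q' k - q k) = - D k"
  shows "D (k - 1) = D k"
proof -
  have "sgn (x' (k - 1) - x (k - 1)) = D k"
    using binding[OF k] q_pos[OF k] x_pos[of "k - 1"] const_pos[OF k] p_sgn[OF k] opp k
    by (intro sgn_binding_balance[of "x (k - 1)" "q k" "l k" "p k"])
       (auto simp: D_def mult.commute)
  then show ?thesis by (simp add: D_def)
qed

text \<open>Conservation of the source \<open>E\<close> forces \<open>x_0\<close> and \<open>x_1\<close> to move oppositely.\<close>
lemma source_alternation: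
  assumes "1 \<le> n"
  shows "D 1 = - D 0"
proof -
  have "x' 0 - x 0 = - (g 1 * (p' 1 - p 1))"
    using source_total by (simp add: algebra_simps)
  moreover have "sgn (g 1 * (p' 1 - p 1)) = D 1"
    using assms const_pos[of 1] by (intro sgn_scaled_p_change) auto
  ultimately show ?thesis by (simp add: D_def)
qed

end

locale single_total_change = cascade_comparison +
  fixes i :: nat
  assumes i_range: "i \<in> {1..n}"
    and unchanged: "\<And>k. k \<in> {1..n} \<Longrightarrow> k \<noteq> i \<Longrightarrow> Sb' k = Sb k"
begin

lemma alternation_above:
  assumes "1 \<le> k" and "k \<le> i"
  shows "D k = - D (k - 1)"
  using assms
proof (induction k rule: dec_induct)
  case base
  then show ?case using i_range source_alternation by auto
next
  case (step m)
  have m: "m \<in> {1..n}" "m < n" "m \<noteq> i" using step i_range by auto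
  have "D (m - 1) = - D m" using step by simp
  then have "sgn ((q' m - q m) + own_change m) = D m"
    using sgn_add_same[OF q_change_follows[OF m(1)] sgn_own_change[OF m(1)]] by simp
  moreover have "next_change m = - ((q' m - q m) + own_change m)"
    using layer_change[OF m(1)] unchanged[OF m(1,3)] by simp
  ultimately have "sgn (next_change m) = - D m" by (simp only: sgn_minus)
  then show ?case using sgn_next_change[OF m(2)] by simp
qed

lemma constancy_below:
  assumes "i \<le> k" and "k < n"
  shows "D (Suc k) = D k"
proof -
  have "k < n \<longrightarrow> D (Suc k) = D k" if "k \<le> n" "i \<le> k" for k
    using that
  proof (induction k rule: inc_induct)
    case base
    then show ?case by simp
  next
    case (step m)
    show ?case
    proof
      assume "m < n"
      have m: "Suc m \<in> {1..n}" "Suc m \<noteq> i" using step \<open>m < n\<close> by auto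
      have "sgn (own_change (Suc m) + next_change (Suc m)) = D (Suc m)"
        using step by (intro sgn_add_next_change sgn_own_change[OF m(1)]) auto
      moreover have "q' (Suc m) - q (Suc m) = - (own_change (Suc m) + next_change (Suc m))"
        using layer_change[OF m(1)] unchanged[OF m] by simp
      ultimately have "sgn (q' (Suc m) - q (Suc m)) = - D (Suc m)" by (simp only: sgn_minus)
      then show "D (Suc m) = D m"
        using x_prev_change_follows[OF m(1)] by simp
    qed
  qed
  then show ?thesis using assms by simp
qed

lemma perturbed_layer_sign: "D i = sgn (Sb' i - Sb i)"
proof -
  have i: "i \<in> {1..n}" by (fact i_range)
  have "D (i - 1) = - D i" using alternation_above[of i] i by simp
  then have "sgn ((q' i - q i) + own_change i) = D i"
    using sgn_add_same[OF q_change_follows[OF i] sgn_own_change[OF i]] by simp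
  then have "sgn ((q' i - q i) + own_change i + next_change i) = D i"
    using constancy_below[of i] by (intro sgn_add_next_change) auto
  then show ?thesis using layer_change[OF i] by simp
qed

lemma sign_pattern:
  assumes "j \<le> i"
  shows "D j = (-1) ^ (i - j) * sgn (Sb' i - Sb i)"
  using assms
proof (induction j rule: inc_induct)
  case base
  then show ?case using perturbed_layer_sign by simp
next
  case (step m)
  have "D (Suc m) = - D m" using alternation_above[of "Suc m"] step by simp
  moreover have "i - m = Suc (i - Suc m)" using step by simp
  ultimately show ?case using step.IH by simp
qed

end

section \<open>Steady states of the PTM cascade\<close>

lemma ptm_rates_pos:
  assumes "\<forall>k\<in>{1..n}. 0 < a0 k \<and> 0 < b0 k \<and> 0 < c0 k \<and> 0 < a1 k \<and> 0 < b1 k \<and> 0 < c1 k"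
    and "k \<in> {1..n}"
  shows "0 < ptm_delta a1 b1 c1 k \<and> 0 < ptm_gamma c0 a1 b1 c1 k
    \<and> 0 < ptm_lambda a0 b0 c0 a1 b1 c1 k"
  using bspec[OF assms] by (auto simp: ptm_delta_def ptm_gamma_def ptm_lambda_def)

lemma ptm_steady_state_reduced:
  assumes ss: "ptm_steady_state n a0 b0 c0 a1 b1 c1 Ebar Fbar Sbar S0 S1 F Y0 Y1"
    and n: "1 \<le> n"
  defines "d \<equiv> ptm_delta a1 b1 c1" and "g \<equiv> ptm_gamma c0 a1 b1 c1"
    and "l \<equiv> ptm_lambda a0 b0 c0 a1 b1 c1"
  shows "\<And>k. k \<in> {1..n} \<Longrightarrow> F k * (1 + d k * S1 k) = Fbar k"
    and "\<And>k. k \<in> {1..n} \<Longrightarrow> S0 k * S1 (k - 1) = l k * (F k * S1 k)"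
    and "\<And>k. k \<in> {1..n} \<Longrightarrow> Sbar k = S0 k + S1 k + (g k + d k) * (F k * S1 k)
            + (if k < n then g (Suc k) * (F (Suc k) * S1 (Suc k)) else 0)"
    and "Ebar = S1 0 + g 1 * (F 1 * S1 1)"
proof -
  have eqs: "\<And>k. k \<in> {1..n} \<Longrightarrow> Y0 k = g k * F k * S1 k \<and> Y1 k = d k * F k * S1 k \<and>
      l k * F k * S1 k = S0 k * S1 (k - 1) \<and> Fbar k = F k + Y1 k \<and>
      Sbar k = S0 k + S1 k + Y0 k + Y1 k + (if k < n then Y0 (k + 1) else 0)"
    and src: "Ebar = S1 0 + Y0 1"
    using ss unfolding ptm_steady_state_def d_def g_def l_def by auto
  show "\<And>k. k \<in> {1..n} \<Longrightarrow> F k * (1 + d k * S1 k) = Fbar k"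
    using eqs by (simp add: algebra_simps)
  show "\<And>k. k \<in> {1..n} \<Longrightarrow> S0 k * S1 (k - 1) = l k * (F k * S1 k)"
    using eqs by (simp add: mult.assoc)
  show "Ebar = S1 0 + g 1 * (F 1 * S1 1)"
    using src eqs[of 1] n by (simp add: mult.assoc)
  fix k assume k: "k \<in> {1..n}"
  have "k < n \<Longrightarrow> Suc k \<in> {1..n}" using k by simp
  then show "Sbar k = S0 k + S1 k + (g k + d k) * (F k * S1 k)
      + (if k < n then g (Suc k) * (F (Suc k) * S1 (Suc k)) else 0)"
    using eqs[OF k] eqs[of "Suc k"] by (auto simp: algebra_simps)
qed

text \<open>With positive totals, every nonnegative steady state is strictly positive in \<open>F\<close>,
  \<open>S^1\<close> and \<open>S^0\<close>: a vanishing modified form would empty the next layer or the source.\<close>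
lemma ptm_bmss_pos:
  assumes n: "1 \<le> n"
    and rates: "\<forall>k\<in>{1..n}. 0 < a0 k \<and> 0 < b0 k \<and> 0 < c0 k \<and> 0 < a1 k \<and> 0 < b1 k \<and> 0 < c1 k"
    and E: "0 < Ebar"
    and tot: "\<forall>k\<in>{1..n}. 0 < Fbar k \<and> 0 < Sbar k"
    and bmss: "ptm_bmss n a0 b0 c0 a1 b1 c1 Ebar Fbar Sbar S0 S1 F Y0 Y1"
  shows "\<And>k. k \<in> {1..n} \<Longrightarrow> 0 < F k"
    and "\<And>k. k \<le> n \<Longrightarrow> 0 < S1 k"
    and "\<And>k. k \<in> {1..n} \<Longrightarrow> 0 < S0 k"
proof -
  have ss: "ptm_steady_state n a0 b0 c0 a1 b1 c1 Ebar Fbar Sbar S0 S1 F Y0 Y1"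
    and nn: "0 \<le> S1 0" "\<And>k. k \<in> {1..n} \<Longrightarrow> 0 \<le> S0 k \<and> 0 \<le> S1 k \<and> 0 \<le> F k"
    using bmss unfolding ptm_bmss_def by auto
  note red = ptm_steady_state_reduced[OF ss n]
  note rp = ptm_rates_pos[OF rates]
  show Fp: "\<And>k. k \<in> {1..n} \<Longrightarrow> 0 < F k"
  proof -
    fix k assume k: "k \<in> {1..n}"
    have "F k \<noteq> 0" using red(1)[OF k] tot k by force
    then show "0 < F k" using nn(2)[OF k] by simp
  qed
  text \<open>If \<open>S_k^1 = 0\<close> then \<open>S_(k+1)^1 = 0\<close>, since \<open>l p_(k+1) = S_(k+1)^0 S_k^1\<close>.\<close>
  have next_zero: "S1 (Suc k) = 0" if "Suc k \<in> {1..n}" "S1 k = 0" for k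
    using red(2)[OF that(1)] that rp[OF that(1)] Fp[OF that(1)] by simp
  show S1p: "\<And>k. k \<le> n \<Longrightarrow> 0 < S1 k"
  proof -
    fix k show "k \<le> n \<Longrightarrow> 0 < S1 k"
    proof (induction k)
      case 0
      show ?case
      proof (rule ccontr)
        assume "\<not> 0 < S1 0"
        then have "S1 0 = 0" using nn by simp
        then have "S1 1 = 0" using next_zero[of 0] n by simp
        then show False using red(4) \<open>S1 0 = 0\<close> E by simp
      qed
    next
      case (Suc k)
      have k: "Suc k \<in> {1..n}" using Suc.prems by simp
      show ?case
      proof (rule ccontr)
        assume "\<not> 0 < S1 (Suc k)"
        then have z: "S1 (Suc k) = 0" using nn(2)[OF k] by simp
        have "S0 (Suc k) = 0"
          using red(2)[OF k] z Suc by simp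
        moreover have "Suc k < n \<Longrightarrow> S1 (Suc (Suc k)) = 0"
          using next_zero[of "Suc k"] z by simp
        ultimately have "Sbar (Suc k) = 0" using red(3)[OF k] z by simp
        then show False using bspec[OF tot k] by simp
      qed
    qed
  qed
  show "\<And>k. k \<in> {1..n} \<Longrightarrow> 0 < S0 k"
  proof -
    fix k assume k: "k \<in> {1..n}"
    have "0 < S0 k * S1 (k - 1)"
      using red(2)[OF k] rp[OF k] Fp[OF k] S1p[of k] k by simp
    moreover have "0 < S1 (k - 1)" using k by (intro S1p) auto
    ultimately show "0 < S0 k" by (simp add: zero_less_mult_iff)
  qed
qed

lemma ptm_bmss_comparison:
  assumes n: "1 \<le> n"
    and rates: "\<forall>k\<in>{1..n}. 0 < a0 k \<and> 0 < b0 k \<and> 0 < c0 k \<and> 0 < a1 k \<and> 0 < b1 k \<and> 0 < c1 k"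
    and E: "0 < Ebar"
    and tot: "\<forall>k\<in>{1..n}. 0 < Fbar k \<and> 0 < Sbar k \<and> 0 < Sbar' k"
    and bmss: "ptm_bmss n a0 b0 c0 a1 b1 c1 Ebar Fbar Sbar S0 S1 F Y0 Y1"
    and bmss': "ptm_bmss n a0 b0 c0 a1 b1 c1 Ebar Fbar Sbar' S0' S1' F' Y0' Y1'"
  shows "cascade_comparison n S1 S1' S0 S0' (\<lambda>k. F k * S1 k) (\<lambda>k. F' k * S1' k)
           (ptm_lambda a0 b0 c0 a1 b1 c1) (ptm_gamma c0 a1 b1 c1)
           (\<lambda>k. ptm_gamma c0 a1 b1 c1 k + ptm_delta a1 b1 c1 k) Sbar Sbar' Ebar"
proof -
  have tot1: "\<forall>k\<in>{1..n}. 0 < Fbar k \<and> 0 < Sbar k"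
    and tot2: "\<forall>k\<in>{1..n}. 0 < Fbar k \<and> 0 < Sbar' k" using tot by auto
  note pos = ptm_bmss_pos[OF n rates E tot1 bmss]
  note pos' = ptm_bmss_pos[OF n rates E tot2 bmss']
  note red = ptm_steady_state_reduced[OF bmss[unfolded ptm_bmss_def, THEN conjunct1] n]
  note red' = ptm_steady_state_reduced[OF bmss'[unfolded ptm_bmss_def, THEN conjunct1] n]
  note rp = ptm_rates_pos[OF rates]
  show ?thesis
  proof
    fix k assume k: "k \<in> {1..n}"
    show "sgn (F' k * S1' k - F k * S1 k) = sgn (S1' k - S1 k)"
      using red(1)[OF k] red'(1)[OF k] rp[OF k] tot k pos(2)[of k] pos'(2)[of k]
      by (intro sgn_saturation[where d = "ptm_delta a1 b1 c1 k" and B = "Fbar k"]) auto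
  qed (use pos pos' rp red red' in \<open>auto simp: add_pos_pos\<close>)
qed

theorem mainTheorem8:
  fixes n i j :: nat
    and a0 b0 c0 a1 b1 c1 Fbar Sbar Sbar' :: "nat \<Rightarrow> real"
    and Ebar :: real
    and S0 S1 F Y0 Y1 S0' S1' F' Y0' Y1' :: "nat \<Rightarrow> real"
  assumes "n \<ge> 1"
    and "\<forall>k\<in>{1..n}. a0 k > 0 \<and> b0 k > 0 \<and> c0 k > 0 \<and> a1 k > 0 \<and> b1 k > 0 \<and> c1 k > 0"
    and "Ebar > 0"
    and "\<forall>k\<in>{1..n}. Fbar k > 0 \<and> Sbar k > 0 \<and> Sbar' k > 0"
    and "i \<in> {1..n}"
    and "\<forall>k\<in>{1..n}. k \<noteq> i \<longrightarrow> Sbar' k = Sbar k"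
    and "Sbar i < Sbar' i"
    and "ptm_bmss n a0 b0 c0 a1 b1 c1 Ebar Fbar Sbar S0 S1 F Y0 Y1"
    and "ptm_bmss n a0 b0 c0 a1 b1 c1 Ebar Fbar Sbar' S0' S1' F' Y0' Y1'"
    and "j \<in> {1..i}"
  shows "(even (i - j) \<longrightarrow> S1 j < S1' j) \<and> (odd (i - j) \<longrightarrow> S1' j < S1 j)"
proof -
  interpret cascade_comparison n S1 S1' S0 S0' "\<lambda>k. F k * S1 k" "\<lambda>k. F' k * S1' k"
      "ptm_lambda a0 b0 c0 a1 b1 c1" "ptm_gamma c0 a1 b1 c1"
      "\<lambda>k. ptm_gamma c0 a1 b1 c1 k + ptm_delta a1 b1 c1 k" Sbar Sbar' Ebar
    using ptm_bmss_comparison assms(1-4,8,9) .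
  interpret single_total_change n S1 S1' S0 S0' "\<lambda>k. F k * S1 k" "\<lambda>k. F' k * S1' k"
      "ptm_lambda a0 b0 c0 a1 b1 c1" "ptm_gamma c0 a1 b1 c1"
      "\<lambda>k. ptm_gamma c0 a1 b1 c1 k + ptm_delta a1 b1 c1 k" Sbar Sbar' Ebar i
    using assms(5,6) by unfold_locales auto
  have change: "sgn (S1' j - S1 j) = (-1) ^ (i - j)"
    using sign_pattern[of j] assms(7,10) by (simp add: D_def)
  show ?thesis
  proof (intro conjI impI)
    assume "even (i - j)"
    then have "sgn (S1' j - S1 j) = 1" using change by simp
    then show "S1 j < S1' j" by (simp add: sgn_if split: if_splits)
  next
    assume "odd (i - j)"
    then have "sgn (S1' j - S1 j) = -1" using change by simp
    then show "S1' j < S1 j" by (simp add: sgn_if split: if_splits)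
  qed
qed

end
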